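(* Let $R$ be a commutative ring with identity and $M$ a non-zero comultiplication $R$-module with $G'(M)$ non-null and $|\mathrm{Min}(M)|<\infty$. Then the independence number of $G'(M)$ equals $|\mathrm{Min}(M)|$.
   Context: An $R$-module $M$ is a comultiplication module if for every submodule $N$ of $M$ there is an ideal $I$ of $R$ with $N=\mathrm{Ann}_M(I)$. A submodule $N$ of $M$ is large if $N\cap L\neq 0$ for every non-zero submodule $L$ of $M$. $\mathrm{Min}(M)$ is the set of minimal submodules of $M$. The large sum graph $G'(M)$ has as vertex set the set of all non-zero non-large submodules of $M$, and two distinct vertices $N,K$ are adjacent iff $N+K$ is non-large in $M$. The independence number $\alpha(G)$ is the maximum size of a set of pairwise non-adjacent vertices of $G$. *)

theory Defs
  imports "HOL-Algebra.Module" "HOL-Algebra.Ideal" "HOL-Library.Extended_Nat"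
begin

definition ann_mod :: "('a, 'c) ring_scheme \<Rightarrow> ('a, 'b, 'd) module_scheme \<Rightarrow> 'a set \<Rightarrow> 'b set" where
  "ann_mod R M I = {x \<in> carrier M. \<forall>a\<in>I. a \<odot>\<^bsub>M\<^esub> x = \<zero>\<^bsub>M\<^esub>}"

definition comultiplication_module :: "('a, 'c) ring_scheme \<Rightarrow> ('a, 'b, 'd) module_scheme \<Rightarrow> bool" where
  "comultiplication_module R M \<longleftrightarrow>
     (\<forall>N. submodule N R M \<longrightarrow> (\<exists>I. ideal I R \<and> N = ann_mod R M I))"

definition large_submodule :: "('a, 'c) ring_scheme \<Rightarrow> ('a, 'b, 'd) module_scheme \<Rightarrow> 'b set \<Rightarrow> bool" where
  "large_submodule R M N \<longleftrightarrow> submodule N R M \<and>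
     (\<forall>L. submodule L R M \<and> L \<noteq> {\<zero>\<^bsub>M\<^esub>} \<longrightarrow> N \<inter> L \<noteq> {\<zero>\<^bsub>M\<^esub>})"

definition minimal_submodule :: "('a, 'c) ring_scheme \<Rightarrow> ('a, 'b, 'd) module_scheme \<Rightarrow> 'b set \<Rightarrow> bool" where
  "minimal_submodule R M N \<longleftrightarrow> submodule N R M \<and> N \<noteq> {\<zero>\<^bsub>M\<^esub>} \<and>
     (\<forall>L. submodule L R M \<and> L \<subseteq> N \<and> L \<noteq> {\<zero>\<^bsub>M\<^esub>} \<longrightarrow> L = N)"

definition Min_sub :: "('a, 'c) ring_scheme \<Rightarrow> ('a, 'b, 'd) module_scheme \<Rightarrow> 'b set set" where
  "Min_sub R M = {N. minimal_submodule R M N}"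

definition sum_sub :: "('a, 'b, 'd) module_scheme \<Rightarrow> 'b set \<Rightarrow> 'b set \<Rightarrow> 'b set" where
  "sum_sub M N K = {n \<oplus>\<^bsub>M\<^esub> k | n k. n \<in> N \<and> k \<in> K}"

definition lsg_vertices :: "('a, 'c) ring_scheme \<Rightarrow> ('a, 'b, 'd) module_scheme \<Rightarrow> 'b set set" where
  "lsg_vertices R M = {N. submodule N R M \<and> N \<noteq> {\<zero>\<^bsub>M\<^esub>} \<and> \<not> large_submodule R M N}"

definition lsg_adj :: "('a, 'c) ring_scheme \<Rightarrow> ('a, 'b, 'd) module_scheme \<Rightarrow> 'b set \<Rightarrow> 'b set \<Rightarrow> bool" where
  "lsg_adj R M N K \<longleftrightarrow> N \<in> lsg_vertices R M \<and> K \<in> lsg_vertices R M \<and> N \<noteq> K \<and>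
     \<not> large_submodule R M (sum_sub M N K)"

definition lsg_independent :: "('a, 'c) ring_scheme \<Rightarrow> ('a, 'b, 'd) module_scheme \<Rightarrow> 'b set set \<Rightarrow> bool" where
  "lsg_independent R M S \<longleftrightarrow> S \<subseteq> lsg_vertices R M \<and> (\<forall>N\<in>S. \<forall>K\<in>S. \<not> lsg_adj R M N K)"

definition lsg_independence_number :: "('a, 'c) ring_scheme \<Rightarrow> ('a, 'b, 'd) module_scheme \<Rightarrow> enat" where
  "lsg_independence_number R M =
     Sup ((\<lambda>S. if finite S then enat (card S) else \<infinity>) ` {S. lsg_independent R M S})"

definition lsg_non_null :: "('a, 'c) ring_scheme \<Rightarrow> ('a, 'b, 'd) module_scheme \<Rightarrow> bool" where
  "lsg_non_null R M \<longleftrightarrow> (\<exists>N K. lsg_adj R M N K)"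

end

theory Submission imports Defs "HOL-Algebra.Ring_Divisibility" begin

(* In a comultiplication module every non-zero submodule contains a minimal one: for x \<noteq> 0
   take a maximal ideal m containing Ann(x); then x is not in m x = ann_M(I), so some r \<in> I gives
   y = r x \<noteq> 0 with m y = 0, and R y is minimal. Consequently a submodule is large iff it contains
   every minimal submodule, and a minimal submodule inside N + K lies in N or in K, because
   N = ann_M(I), K = ann_M(J) and the annihilator of a minimal submodule is prime.
   For an independent set, choosing for each vertex N a minimal submodule not contained in N is
   therefore injective, which bounds the independence number by |Min(M)|. Conversely, for each
   minimal S there is r_S killing every other minimal submodule but not S; the submodules
   ann_M(r_S) are pairwise non-adjacent vertices, since an edge of G'(M) forces |Min(M)| \<noteq> 1. *)

lemma (in cring) ideal_subset_maximalideal: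
  assumes I: "ideal I R" and proper: "I \<noteq> carrier R"
  obtains m where "maximalideal m R" "I \<subseteq> m"
proof -
  define \<A> where "\<A> = {J. ideal J R \<and> I \<subseteq> J \<and> \<one> \<notin> J}"
  have "\<exists>m\<in>\<A>. \<forall>J\<in>\<A>. m \<subseteq> J \<longrightarrow> J = m"
  proof (rule subset_Zorn_nonempty)
    have "\<one> \<notin> I" using ideal.one_imp_carrier[OF I] proper by blast
    then show "\<A> \<noteq> {}" unfolding \<A>_def using I by blast
  next
    fix \<C> assume "\<C> \<noteq> {}" and chain: "subset.chain \<A> \<C>"
    have "\<C> \<subseteq> \<A>" using chain by (simp add: pred_on.chain_def)
    have "subset.chain {J. ideal J R} \<C>"
      using chain \<open>\<C> \<subseteq> \<A>\<close> unfolding pred_on.chain_def \<A>_def by blast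
    from chain_Union_is_ideal[OF this] have "ideal (\<Union>\<C>) R"
      using \<open>\<C> \<noteq> {}\<close> by simp
    moreover have "I \<subseteq> \<Union>\<C>" "\<one> \<notin> \<Union>\<C>"
      using \<open>\<C> \<noteq> {}\<close> \<open>\<C> \<subseteq> \<A>\<close> unfolding \<A>_def by blast+
    ultimately show "\<Union>\<C> \<in> \<A>" unfolding \<A>_def by blast
  qed
  then obtain m where "m \<in> \<A>" and max: "\<And>J. J \<in> \<A> \<Longrightarrow> m \<subseteq> J \<Longrightarrow> J = m"
    by blast
  then have m: "ideal m R" "I \<subseteq> m" "\<one> \<notin> m" unfolding \<A>_def by simp_all
  have "maximalideal m R"
  proof (rule maximalidealI[OF m(1)])
    show "carrier R \<noteq> m" using m(3) by auto
    show "J = m \<or> J = carrier R" if J: "ideal J R" "m \<subseteq> J" "J \<subseteq> carrier R" for J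
    proof (cases "\<one> \<in> J")
      case True then show ?thesis using ideal.one_imp_carrier[OF J(1)] by simp
    next
      case False then show ?thesis using max[of J] J m(2) unfolding \<A>_def by simp
    qed
  qed
  then show thesis using m(2) by (rule that)
qed

lemma (in cring) maximalideal_one_decomposition:
  assumes m: "maximalideal m R" and b: "b \<in> carrier R" "b \<notin> m"
  obtains u c where "u \<in> m" "c \<in> carrier R" "\<one> = u \<oplus> c \<otimes> b"
proof -
  interpret maximalideal m R by fact
  define J where "J = m <+>\<^bsub>R\<^esub> PIdl b"
  have J: "ideal J R"
    unfolding J_def by (rule add_ideals[OF is_ideal cgenideal_ideal[OF b(1)]])
  have zero_b: "\<zero> \<in> PIdl b" and b_b: "b \<in> PIdl b"
    using ideal.axioms(1)[OF cgenideal_ideal[OF b(1)]] cgenideal_self[OF b(1)]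
    by (simp_all add: additive_subgroup.zero_closed)
  have "m \<subseteq> J"
  proof
    fix u assume "u \<in> m"
    then have "u = u \<oplus> \<zero>" by (simp add: Icarr)
    with \<open>u \<in> m\<close> zero_b show "u \<in> J" unfolding J_def set_add_def' by blast
  qed
  moreover have "b \<in> J"
  proof -
    have "b = \<zero> \<oplus> b" using b(1) by simp
    with zero_closed b_b show ?thesis unfolding J_def set_add_def' by blast
  qed
  ultimately have "J = carrier R"
    using I_maximal[OF J] b(2) ideal.Icarr[OF J] by blast
  then have "\<one> \<in> m <+>\<^bsub>R\<^esub> PIdl b" unfolding J_def by simp
  then obtain u k where "u \<in> m" "k \<in> PIdl b" "\<one> = u \<oplus> k"
    unfolding set_add_def' by blast
  moreover from \<open>k \<in> PIdl b\<close> obtain c where "c \<in> carrier R" "k = c \<otimes> b"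
    unfolding cgenideal_def by blast
  ultimately show thesis by (intro that) simp_all
qed

lemma mem_ann_mod_singleton [simp]:
  "x \<in> ann_mod R M {a} \<longleftrightarrow> x \<in> carrier M \<and> a \<odot>\<^bsub>M\<^esub> x = \<zero>\<^bsub>M\<^esub>"
  unfolding ann_mod_def by simp

context Module.module
begin

lemma smult_commute:
  assumes "a \<in> carrier R" "b \<in> carrier R" "x \<in> carrier M"
  shows "a \<odot>\<^bsub>M\<^esub> (b \<odot>\<^bsub>M\<^esub> x) = b \<odot>\<^bsub>M\<^esub> (a \<odot>\<^bsub>M\<^esub> x)"
proof -
  have "a \<odot>\<^bsub>M\<^esub> (b \<odot>\<^bsub>M\<^esub> x) = (a \<otimes> b) \<odot>\<^bsub>M\<^esub> x" using assms by (simp add: smult_assoc1)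
  also have "\<dots> = (b \<otimes> a) \<odot>\<^bsub>M\<^esub> x" using assms by (simp add: m_comm)
  also have "\<dots> = b \<odot>\<^bsub>M\<^esub> (a \<odot>\<^bsub>M\<^esub> x)" using assms by (simp add: smult_assoc1)
  finally show ?thesis .
qed

lemma submodule_zero: "submodule N R M \<Longrightarrow> \<zero>\<^bsub>M\<^esub> \<in> N"
  using subgroup.one_closed[OF submodule.axioms(1)] by simp

lemma submodule_ann_mod:
  assumes "I \<subseteq> carrier R"
  shows "submodule (ann_mod R M I) R M"
proof (rule submoduleI)
  show "ann_mod R M I \<subseteq> carrier M" "\<zero>\<^bsub>M\<^esub> \<in> ann_mod R M I"
    using assms unfolding ann_mod_def by auto
  show "\<ominus>\<^bsub>M\<^esub> x \<in> ann_mod R M I" if "x \<in> ann_mod R M I" for x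
    using that assms unfolding ann_mod_def by (auto simp: smult_r_minus)
  show "x \<oplus>\<^bsub>M\<^esub> y \<in> ann_mod R M I" if "x \<in> ann_mod R M I" "y \<in> ann_mod R M I" for x y
    using that assms unfolding ann_mod_def by (auto simp: smult_r_distr)
  show "c \<odot>\<^bsub>M\<^esub> x \<in> ann_mod R M I" if "c \<in> carrier R" "x \<in> ann_mod R M I" for c x
    using that assms unfolding ann_mod_def by (auto simp: smult_commute[of _ c])
qed

lemma submodule_smult_ideal:
  assumes I: "ideal I R" and x: "x \<in> carrier M"
  shows "submodule {a \<odot>\<^bsub>M\<^esub> x | a. a \<in> I} R M"
proof (rule submoduleI)
  show "{a \<odot>\<^bsub>M\<^esub> x | a. a \<in> I} \<subseteq> carrier M"
    using x ideal.Icarr[OF I] by auto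
  have "\<zero>\<^bsub>M\<^esub> = \<zero> \<odot>\<^bsub>M\<^esub> x" using x by simp
  then show "\<zero>\<^bsub>M\<^esub> \<in> {a \<odot>\<^bsub>M\<^esub> x | a. a \<in> I}"
    using additive_subgroup.zero_closed[OF ideal.axioms(1)[OF I]] by blast
next
  fix y z assume "y \<in> {a \<odot>\<^bsub>M\<^esub> x | a. a \<in> I}" "z \<in> {a \<odot>\<^bsub>M\<^esub> x | a. a \<in> I}"
  then obtain a b where ab: "a \<in> I" "b \<in> I" "y = a \<odot>\<^bsub>M\<^esub> x" "z = b \<odot>\<^bsub>M\<^esub> x" by blast
  have "\<ominus>\<^bsub>M\<^esub> y = (\<ominus> a) \<odot>\<^bsub>M\<^esub> x" using ab x ideal.Icarr[OF I] by (simp add: smult_l_minus)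
  then show "\<ominus>\<^bsub>M\<^esub> y \<in> {a \<odot>\<^bsub>M\<^esub> x | a. a \<in> I}"
    using ab additive_subgroup.a_inv_closed[OF ideal.axioms(1)[OF I]] by blast
  have "y \<oplus>\<^bsub>M\<^esub> z = (a \<oplus> b) \<odot>\<^bsub>M\<^esub> x" using ab x ideal.Icarr[OF I] by (simp add: smult_l_distr)
  then show "y \<oplus>\<^bsub>M\<^esub> z \<in> {a \<odot>\<^bsub>M\<^esub> x | a. a \<in> I}"
    using ab additive_subgroup.a_closed[OF ideal.axioms(1)[OF I]] by blast
next
  fix c y assume c: "c \<in> carrier R" and "y \<in> {a \<odot>\<^bsub>M\<^esub> x | a. a \<in> I}"
  then obtain a where a: "a \<in> I" "y = a \<odot>\<^bsub>M\<^esub> x" by blast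
  then have "c \<odot>\<^bsub>M\<^esub> y = (c \<otimes> a) \<odot>\<^bsub>M\<^esub> x"
    using c x ideal.Icarr[OF I] by (simp add: smult_assoc1)
  then show "c \<odot>\<^bsub>M\<^esub> y \<in> {a \<odot>\<^bsub>M\<^esub> x | a. a \<in> I}"
    using a c ideal.I_l_closed[OF I] by blast
qed

lemma submodule_sum_sub:
  assumes N: "submodule N R M" and K: "submodule K R M"
  shows "submodule (sum_sub M N K) R M"
proof (rule submoduleI)
  show "sum_sub M N K \<subseteq> carrier M"
    using submoduleE(1)[OF N] submoduleE(1)[OF K] unfolding sum_sub_def by auto
  show "\<zero>\<^bsub>M\<^esub> \<in> sum_sub M N K"
    using submodule_zero[OF N] submodule_zero[OF K] unfolding sum_sub_def by force
next
  fix y z assume "y \<in> sum_sub M N K" "z \<in> sum_sub M N K"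
  then obtain n k n' k' where nk: "n \<in> N" "k \<in> K" "y = n \<oplus>\<^bsub>M\<^esub> k"
    and nk': "n' \<in> N" "k' \<in> K" "z = n' \<oplus>\<^bsub>M\<^esub> k'"
    unfolding sum_sub_def by blast
  have carr: "n \<in> carrier M" "k \<in> carrier M" "n' \<in> carrier M" "k' \<in> carrier M"
    using nk nk' submoduleE(1)[OF N] submoduleE(1)[OF K] by auto
  have "\<ominus>\<^bsub>M\<^esub> y = \<ominus>\<^bsub>M\<^esub> n \<oplus>\<^bsub>M\<^esub> \<ominus>\<^bsub>M\<^esub> k"
    using nk carr by (simp add: M.minus_add)
  then show "\<ominus>\<^bsub>M\<^esub> y \<in> sum_sub M N K"
    using nk submoduleE(3)[OF N] submoduleE(3)[OF K] unfolding sum_sub_def by blast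
  have "y \<oplus>\<^bsub>M\<^esub> z = (n \<oplus>\<^bsub>M\<^esub> n') \<oplus>\<^bsub>M\<^esub> (k \<oplus>\<^bsub>M\<^esub> k')"
    using nk nk' carr by (simp add: M.a_ac)
  then show "y \<oplus>\<^bsub>M\<^esub> z \<in> sum_sub M N K"
    using nk nk' submoduleE(5)[OF N] submoduleE(5)[OF K] unfolding sum_sub_def by blast
next
  fix c y assume c: "c \<in> carrier R" and "y \<in> sum_sub M N K"
  then obtain n k where nk: "n \<in> N" "k \<in> K" "y = n \<oplus>\<^bsub>M\<^esub> k"
    unfolding sum_sub_def by blast
  then have "c \<odot>\<^bsub>M\<^esub> y = c \<odot>\<^bsub>M\<^esub> n \<oplus>\<^bsub>M\<^esub> c \<odot>\<^bsub>M\<^esub> k"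
    using c nk submoduleE(1)[OF N] submoduleE(1)[OF K] by (simp add: subset_iff smult_r_distr)
  then show "c \<odot>\<^bsub>M\<^esub> y \<in> sum_sub M N K"
    using nk c submoduleE(4)[OF N] submoduleE(4)[OF K] unfolding sum_sub_def by blast
qed

lemma subset_sum_sub_left: "submodule N R M \<Longrightarrow> submodule K R M \<Longrightarrow> N \<subseteq> sum_sub M N K"
  unfolding sum_sub_def by (force dest: submodule_zero submoduleE(1))

lemma subset_sum_sub_right: "submodule N R M \<Longrightarrow> submodule K R M \<Longrightarrow> K \<subseteq> sum_sub M N K"
  unfolding sum_sub_def by (force dest: submodule_zero submoduleE(1))

lemma ideal_annihilator:
  assumes x: "x \<in> carrier M"
  shows "ideal {a \<in> carrier R. a \<odot>\<^bsub>M\<^esub> x = \<zero>\<^bsub>M\<^esub>} R"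
proof (rule idealI[OF ring_axioms])
  show "subgroup {a \<in> carrier R. a \<odot>\<^bsub>M\<^esub> x = \<zero>\<^bsub>M\<^esub>} (add_monoid R)"
  proof (rule R.add.subgroupI)
    show "{a \<in> carrier R. a \<odot>\<^bsub>M\<^esub> x = \<zero>\<^bsub>M\<^esub>} \<noteq> {}" using x by force
  qed (use x in \<open>auto simp: smult_l_minus smult_l_distr simp flip: a_inv_def\<close>)
  show "c \<otimes> a \<in> {a \<in> carrier R. a \<odot>\<^bsub>M\<^esub> x = \<zero>\<^bsub>M\<^esub>}"
    if "a \<in> {a \<in> carrier R. a \<odot>\<^bsub>M\<^esub> x = \<zero>\<^bsub>M\<^esub>}" "c \<in> carrier R" for a c
    using that x by (simp add: smult_assoc1)
  show "a \<otimes> c \<in> {a \<in> carrier R. a \<odot>\<^bsub>M\<^esub> x = \<zero>\<^bsub>M\<^esub>}"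
    if "a \<in> {a \<in> carrier R. a \<odot>\<^bsub>M\<^esub> x = \<zero>\<^bsub>M\<^esub>}" "c \<in> carrier R" for a c
    using that x by (simp add: smult_assoc1 smult_commute[of a c])
qed

lemma not_mem_smult_ideal_if_annihilator_subset:
  assumes I: "ideal I R" "\<one> \<notin> I" and x: "x \<in> carrier M"
    and ann: "{a \<in> carrier R. a \<odot>\<^bsub>M\<^esub> x = \<zero>\<^bsub>M\<^esub>} \<subseteq> I"
  shows "x \<notin> {a \<odot>\<^bsub>M\<^esub> x | a. a \<in> I}"
proof
  assume "x \<in> {a \<odot>\<^bsub>M\<^esub> x | a. a \<in> I}"
  then obtain a where a: "a \<in> I" "x = a \<odot>\<^bsub>M\<^esub> x" by blast
  have a_carr: "a \<in> carrier R" using a(1) ideal.Icarr[OF I(1)] by blast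
  have "(\<one> \<ominus> a) \<odot>\<^bsub>M\<^esub> x = \<zero>\<^bsub>M\<^esub>"
    using a_carr x by (simp add: a_minus_def smult_l_distr smult_l_minus a(2)[symmetric] M.r_neg)
  then have "\<one> \<ominus> a \<in> I" using ann a_carr by blast
  moreover have "\<one> = (\<one> \<ominus> a) \<oplus> a" using a_carr by (simp add: a_minus_def R.a_assoc R.l_neg)
  ultimately have "\<one> \<in> I"
    using a(1) additive_subgroup.a_closed[OF ideal.axioms(1)[OF I(1)]] by metis
  with I(2) show False ..
qed

lemma minimal_submodule_nonzero:
  assumes "minimal_submodule R M S"
  obtains s where "s \<in> S" "s \<noteq> \<zero>\<^bsub>M\<^esub>"
  using assms unfolding minimal_submodule_def by (blast dest: submodule_zero)

lemma minimal_submodule_subset: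
  assumes S: "minimal_submodule R M S" and N: "submodule N R M"
    and s: "s \<in> S" "s \<in> N" "s \<noteq> \<zero>\<^bsub>M\<^esub>"
  shows "S \<subseteq> N"
proof -
  have S_sub: "submodule S R M" using S unfolding minimal_submodule_def by simp
  have s_carr: "s \<in> carrier M" using s(1) submoduleE(1)[OF S_sub] by blast
  let ?Rs = "{a \<odot>\<^bsub>M\<^esub> s | a. a \<in> carrier R}"
  have "submodule ?Rs R M" by (rule submodule_smult_ideal[OF oneideal s_carr])
  moreover have "?Rs \<subseteq> S" using submoduleE(4)[OF S_sub] s(1) by blast
  moreover have "s \<in> ?Rs" using s_carr by (metis (mono_tags, lifting) mem_Collect_eq one_closed smult_one)
  ultimately have "S = ?Rs" using S s(3) unfolding minimal_submodule_def by blast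
  then show ?thesis using submoduleE(4)[OF N] s(2) by blast
qed

text \<open>The annihilator of a minimal submodule is a prime ideal.\<close>
lemma minimal_submodule_not_subset_ann_mod_mult:
  assumes S: "minimal_submodule R M S" and a: "a \<in> carrier R" and b: "b \<in> carrier R"
    and not_a: "\<not> S \<subseteq> ann_mod R M {a}" and not_b: "\<not> S \<subseteq> ann_mod R M {b}"
  shows "\<not> S \<subseteq> ann_mod R M {a \<otimes> b}"
proof
  assume ab: "S \<subseteq> ann_mod R M {a \<otimes> b}"
  have S_sub: "submodule S R M" using S unfolding minimal_submodule_def by simp
  obtain s where s: "s \<in> S" "b \<odot>\<^bsub>M\<^esub> s \<noteq> \<zero>\<^bsub>M\<^esub>"
    using not_b submoduleE(1)[OF S_sub] unfolding subset_iff by auto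
  have bs: "b \<odot>\<^bsub>M\<^esub> s \<in> S" using submoduleE(4)[OF S_sub b s(1)] .
  have "a \<odot>\<^bsub>M\<^esub> (b \<odot>\<^bsub>M\<^esub> s) = \<zero>\<^bsub>M\<^esub>"
    using subsetD[OF ab s(1)] a b by (simp add: smult_assoc1[symmetric])
  then have "b \<odot>\<^bsub>M\<^esub> s \<in> ann_mod R M {a}"
    using bs submoduleE(1)[OF S_sub] by auto
  then have "S \<subseteq> ann_mod R M {a}"
    using minimal_submodule_subset[OF S submodule_ann_mod bs _ s(2)] a by simp
  with not_a show False ..
qed

lemma minimal_submodule_cyclic:
  assumes m: "maximalideal m R" and y: "y \<in> carrier M" "y \<noteq> \<zero>\<^bsub>M\<^esub>"
    and m_y: "\<And>a. a \<in> m \<Longrightarrow> a \<odot>\<^bsub>M\<^esub> y = \<zero>\<^bsub>M\<^esub>"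
  shows "minimal_submodule R M {c \<odot>\<^bsub>M\<^esub> y | c. c \<in> carrier R}"
  unfolding minimal_submodule_def
proof (intro conjI allI impI)
  let ?Ry = "{c \<odot>\<^bsub>M\<^esub> y | c. c \<in> carrier R}"
  show Ry: "submodule ?Ry R M" by (rule submodule_smult_ideal[OF oneideal y(1)])
  have "y \<in> ?Ry" using y(1) by (metis (mono_tags, lifting) mem_Collect_eq one_closed smult_one)
  then show "?Ry \<noteq> {\<zero>\<^bsub>M\<^esub>}" using y(2) by blast
  fix L assume L: "submodule L R M \<and> L \<subseteq> ?Ry \<and> L \<noteq> {\<zero>\<^bsub>M\<^esub>}"
  then obtain z where z: "z \<in> L" "z \<noteq> \<zero>\<^bsub>M\<^esub>" using submodule_zero by blast
  then obtain b where b: "b \<in> carrier R" "z = b \<odot>\<^bsub>M\<^esub> y" using L by blast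
  have "b \<notin> m" using m_y b z(2) by blast
  then obtain u c where uc: "u \<in> m" "c \<in> carrier R" "\<one> = u \<oplus> c \<otimes> b"
    by (rule maximalideal_one_decomposition[OF m b(1)])
  have u: "u \<in> carrier R" using uc(1) ideal.Icarr[OF maximalideal.axioms(1)[OF m]] by blast
  have "y = (u \<oplus> c \<otimes> b) \<odot>\<^bsub>M\<^esub> y" using y(1) by (simp flip: uc(3))
  also have "\<dots> = c \<odot>\<^bsub>M\<^esub> z"
    using u uc(2) b y(1) m_y[OF uc(1)] by (simp add: smult_l_distr smult_assoc1)
  finally have "y \<in> L" using submoduleE(4) L uc(2) z(1) by metis
  then show "L = ?Ry" using L submoduleE(4) by blast
qed

lemma large_submodule_contains_minimal:
  assumes X: "large_submodule R M X" and S: "minimal_submodule R M S"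
  shows "S \<subseteq> X"
proof -
  have "X \<inter> S \<noteq> {\<zero>\<^bsub>M\<^esub>}" and X_sub: "submodule X R M"
    using X S unfolding large_submodule_def minimal_submodule_def by auto
  moreover have "\<zero>\<^bsub>M\<^esub> \<in> X \<inter> S"
    using X_sub S submodule_zero unfolding minimal_submodule_def by blast
  ultimately obtain s where "s \<in> S" "s \<in> X" "s \<noteq> \<zero>\<^bsub>M\<^esub>" by blast
  then show ?thesis by (rule minimal_submodule_subset[OF S X_sub])
qed

lemma comultiplication_module_separates:
  assumes C: "comultiplication_module R M" and N: "submodule N R M"
    and x: "x \<in> carrier M" "x \<notin> N"
  obtains a where "a \<in> carrier R" "N \<subseteq> ann_mod R M {a}" "a \<odot>\<^bsub>M\<^esub> x \<noteq> \<zero>\<^bsub>M\<^esub>"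
proof -
  obtain I where I: "ideal I R" "N = ann_mod R M I"
    using C N unfolding comultiplication_module_def by blast
  then obtain a where "a \<in> I" "a \<odot>\<^bsub>M\<^esub> x \<noteq> \<zero>\<^bsub>M\<^esub>"
    using x unfolding ann_mod_def by blast
  moreover have "N \<subseteq> ann_mod R M {a}"
    using I(2) \<open>a \<in> I\<close> unfolding ann_mod_def by blast
  ultimately show thesis using that ideal.Icarr[OF I(1)] by blast
qed

lemma comultiplication_ex_minimal_submodule:
  assumes C: "comultiplication_module R M" and L: "submodule L R M" "L \<noteq> {\<zero>\<^bsub>M\<^esub>}"
  obtains S where "minimal_submodule R M S" "S \<subseteq> L"
proof -
  obtain x where x: "x \<in> L" "x \<noteq> \<zero>\<^bsub>M\<^esub>" using L submodule_zero by blast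
  have x_carr: "x \<in> carrier M" using x(1) submoduleE(1)[OF L(1)] by blast
  have "\<one> \<notin> {a \<in> carrier R. a \<odot>\<^bsub>M\<^esub> x = \<zero>\<^bsub>M\<^esub>}" using x x_carr by simp
  then obtain m where m: "maximalideal m R" and ann_m: "{a \<in> carrier R. a \<odot>\<^bsub>M\<^esub> x = \<zero>\<^bsub>M\<^esub>} \<subseteq> m"
    using ideal_subset_maximalideal[OF ideal_annihilator[OF x_carr]] by blast
  have m_ideal: "ideal m R" using m by (rule maximalideal.axioms(1))
  have m_carr: "m \<subseteq> carrier R" using ideal.Icarr[OF m_ideal] by blast
  let ?mx = "{a \<odot>\<^bsub>M\<^esub> x | a. a \<in> m}"
  have mx: "submodule ?mx R M"
    by (rule submodule_smult_ideal[OF m_ideal x_carr])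
  have "x \<notin> ?mx"
    using not_mem_smult_ideal_if_annihilator_subset[OF m_ideal _ x_carr ann_m]
      maximalideal.I_notcarr[OF m] ideal.one_imp_carrier[OF m_ideal] by blast
  then obtain r where r: "r \<in> carrier R" "?mx \<subseteq> ann_mod R M {r}" "r \<odot>\<^bsub>M\<^esub> x \<noteq> \<zero>\<^bsub>M\<^esub>"
    by (rule comultiplication_module_separates[OF C mx x_carr])
  have "a \<odot>\<^bsub>M\<^esub> (r \<odot>\<^bsub>M\<^esub> x) = \<zero>\<^bsub>M\<^esub>" if "a \<in> m" for a
  proof -
    have "a \<odot>\<^bsub>M\<^esub> x \<in> ann_mod R M {r}" using r(2) that by blast
    then show ?thesis using r(1) that m_carr x_carr by (auto simp: smult_commute[of a r])
  qed
  then have "minimal_submodule R M {c \<odot>\<^bsub>M\<^esub> (r \<odot>\<^bsub>M\<^esub> x) | c. c \<in> carrier R}"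
    using minimal_submodule_cyclic[OF m] r x_carr by simp
  moreover have "{c \<odot>\<^bsub>M\<^esub> (r \<odot>\<^bsub>M\<^esub> x) | c. c \<in> carrier R} \<subseteq> L"
    using submoduleE(4)[OF L(1)] r(1) x(1) by blast
  ultimately show thesis by (rule that)
qed

lemma comultiplication_large_submodule_iff:
  assumes C: "comultiplication_module R M" and X: "submodule X R M"
  shows "large_submodule R M X \<longleftrightarrow> (\<forall>S. minimal_submodule R M S \<longrightarrow> S \<subseteq> X)"
proof (intro iffI allI impI)
  show "S \<subseteq> X" if "large_submodule R M X" "minimal_submodule R M S" for S
    using large_submodule_contains_minimal that .
next
  assume all: "\<forall>S. minimal_submodule R M S \<longrightarrow> S \<subseteq> X"
  show "large_submodule R M X"
    unfolding large_submodule_def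
  proof (intro conjI allI impI X)
    fix L assume L: "submodule L R M \<and> L \<noteq> {\<zero>\<^bsub>M\<^esub>}"
    then obtain S where S: "minimal_submodule R M S" "S \<subseteq> L"
      using comultiplication_ex_minimal_submodule[OF C] by blast
    then have "S \<subseteq> X \<inter> L" using all by blast
    moreover obtain s where "s \<in> S" "s \<noteq> \<zero>\<^bsub>M\<^esub>" by (rule minimal_submodule_nonzero[OF S(1)])
    ultimately show "X \<inter> L \<noteq> {\<zero>\<^bsub>M\<^esub>}" by blast
  qed
qed

lemma comultiplication_minimal_subset_sum_sub:
  assumes C: "comultiplication_module R M" and S: "minimal_submodule R M S"
    and N: "submodule N R M" and K: "submodule K R M" and sum: "S \<subseteq> sum_sub M N K"
  shows "S \<subseteq> N \<or> S \<subseteq> K"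
proof (rule ccontr)
  assume "\<not> (S \<subseteq> N \<or> S \<subseteq> K)"
  then obtain x y where x: "x \<in> S" "x \<notin> N" and y: "y \<in> S" "y \<notin> K" by blast
  have S_carr: "S \<subseteq> carrier M" using S submoduleE(1) unfolding minimal_submodule_def by blast
  obtain a where a: "a \<in> carrier R" "N \<subseteq> ann_mod R M {a}" "a \<odot>\<^bsub>M\<^esub> x \<noteq> \<zero>\<^bsub>M\<^esub>"
    using comultiplication_module_separates[OF C N] x S_carr by blast
  obtain b where b: "b \<in> carrier R" "K \<subseteq> ann_mod R M {b}" "b \<odot>\<^bsub>M\<^esub> y \<noteq> \<zero>\<^bsub>M\<^esub>"
    using comultiplication_module_separates[OF C K] y S_carr by blast
  have "\<not> S \<subseteq> ann_mod R M {a}" "\<not> S \<subseteq> ann_mod R M {b}"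
    using a(3) b(3) x(1) y(1) by auto
  then have "\<not> S \<subseteq> ann_mod R M {a \<otimes> b}"
    by (rule minimal_submodule_not_subset_ann_mod_mult[OF S a(1) b(1)])
  moreover have "sum_sub M N K \<subseteq> ann_mod R M {a \<otimes> b}"
  proof
    fix z assume "z \<in> sum_sub M N K"
    then obtain n k where nk: "n \<in> N" "k \<in> K" "z = n \<oplus>\<^bsub>M\<^esub> k"
      unfolding sum_sub_def by blast
    have "n \<in> carrier M" "a \<odot>\<^bsub>M\<^esub> n = \<zero>\<^bsub>M\<^esub>" "k \<in> carrier M" "b \<odot>\<^bsub>M\<^esub> k = \<zero>\<^bsub>M\<^esub>"
      using nk a(2) b(2) by auto
    then show "z \<in> ann_mod R M {a \<otimes> b}"
      using nk(3) a(1) b(1)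
      by (simp add: smult_assoc1 smult_r_distr smult_commute[of a b n])
  qed
  ultimately show False using sum by blast
qed

lemma comultiplication_large_sum_sub:
  assumes C: "comultiplication_module R M" and N: "submodule N R M" and K: "submodule K R M"
    and minimal: "\<And>S. minimal_submodule R M S \<Longrightarrow> S \<subseteq> N \<or> S \<subseteq> K"
  shows "large_submodule R M (sum_sub M N K)"
  unfolding comultiplication_large_submodule_iff[OF C submodule_sum_sub[OF N K]]
  using minimal subset_sum_sub_left[OF N K] subset_sum_sub_right[OF N K] by blast

lemma comultiplication_minimal_separating_element:
  assumes C: "comultiplication_module R M" and S: "minimal_submodule R M S"
    and F: "finite F" "\<And>S'. S' \<in> F \<Longrightarrow> minimal_submodule R M S'" "S \<notin> F"
  shows "\<exists>a\<in>carrier R. (\<forall>S'\<in>F. S' \<subseteq> ann_mod R M {a}) \<and> \<not> S \<subseteq> ann_mod R M {a}"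
  using F
proof (induction F rule: finite_induct)
  case empty
  obtain s where "s \<in> S" "s \<noteq> \<zero>\<^bsub>M\<^esub>" by (rule minimal_submodule_nonzero[OF S])
  then have "\<not> S \<subseteq> ann_mod R M {\<one>}" by (auto simp: subset_iff)
  then show ?case by blast
next
  case (insert S' F)
  then obtain a where a: "a \<in> carrier R" "\<forall>S''\<in>F. S'' \<subseteq> ann_mod R M {a}" "\<not> S \<subseteq> ann_mod R M {a}"
    by blast
  have S': "minimal_submodule R M S'" "S \<noteq> S'" using insert.prems by auto
  have S_sub: "submodule S R M" and S_carr: "S \<subseteq> carrier M"
    using S submoduleE(1) unfolding minimal_submodule_def by blast+
  have "\<not> S \<subseteq> S'"
  proof
    assume "S \<subseteq> S'"
    moreover obtain s where "s \<in> S" "s \<noteq> \<zero>\<^bsub>M\<^esub>" by (rule minimal_submodule_nonzero[OF S])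
    ultimately have "S' \<subseteq> S"
      using minimal_submodule_subset[OF S'(1) S_sub] by blast
    with \<open>S \<subseteq> S'\<close> S'(2) show False by blast
  qed
  then obtain x where "x \<in> S" "x \<notin> S'" by blast
  then obtain b where b: "b \<in> carrier R" "S' \<subseteq> ann_mod R M {b}" "\<not> S \<subseteq> ann_mod R M {b}"
    using comultiplication_module_separates[OF C _ _ \<open>x \<notin> S'\<close>] S'(1) S_carr
    unfolding minimal_submodule_def by (metis mem_ann_mod_singleton subsetD)
  have "S'' \<subseteq> ann_mod R M {a \<otimes> b}" if "S'' \<subseteq> ann_mod R M {a} \<or> S'' \<subseteq> ann_mod R M {b}" for S''
    using that a(1) b(1) by (auto simp: smult_assoc1 smult_commute[of a b])
  then have "\<forall>S''\<in>insert S' F. S'' \<subseteq> ann_mod R M {a \<otimes> b}" using a(2) b(2) by blast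
  moreover have "\<not> S \<subseteq> ann_mod R M {a \<otimes> b}"
    by (rule minimal_submodule_not_subset_ann_mod_mult[OF S a(1) b(1) a(3) b(3)])
  ultimately show ?case using a(1) b(1) by blast
qed

lemma comultiplication_separating_family:
  assumes C: "comultiplication_module R M" and fin: "finite (Min_sub R M)"
  obtains a where "\<And>S. S \<in> Min_sub R M \<Longrightarrow> a S \<in> carrier R"
    and "\<And>S S'. S \<in> Min_sub R M \<Longrightarrow> S' \<in> Min_sub R M \<Longrightarrow> S' \<noteq> S \<Longrightarrow> S' \<subseteq> ann_mod R M {a S}"
    and "\<And>S. S \<in> Min_sub R M \<Longrightarrow> \<not> S \<subseteq> ann_mod R M {a S}"
proof -
  have "\<exists>a\<in>carrier R. (\<forall>S'\<in>Min_sub R M - {S}. S' \<subseteq> ann_mod R M {a}) \<and> \<not> S \<subseteq> ann_mod R M {a}"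
    if "S \<in> Min_sub R M" for S
    by (rule comultiplication_minimal_separating_element[OF C]) (use that fin in \<open>auto simp: Min_sub_def\<close>)
  then show thesis using that by (metis Diff_iff singletonD)
qed

lemma lsg_vertex_misses_minimal_submodule:
  assumes C: "comultiplication_module R M" and N: "N \<in> lsg_vertices R M"
  obtains S where "minimal_submodule R M S" "\<not> S \<subseteq> N"
proof -
  have "submodule N R M" "\<not> large_submodule R M N" using N unfolding lsg_vertices_def by auto
  then show thesis using comultiplication_large_submodule_iff[OF C] that by blast
qed

lemma card_Min_sub_neq_one_if_lsg_non_null:
  assumes C: "comultiplication_module R M" and "lsg_non_null R M"
  shows "card (Min_sub R M) \<noteq> 1"
proof
  assume "card (Min_sub R M) = 1"
  then obtain S where Min: "Min_sub R M = {S}" by (rule card_1_singletonE)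
  from assms(2) obtain N where N: "N \<in> lsg_vertices R M"
    unfolding lsg_non_null_def lsg_adj_def by blast
  then obtain S1 where "minimal_submodule R M S1" "\<not> S1 \<subseteq> N"
    by (rule lsg_vertex_misses_minimal_submodule[OF C])
  moreover obtain S2 where "minimal_submodule R M S2" "S2 \<subseteq> N"
    using comultiplication_ex_minimal_submodule[OF C] N unfolding lsg_vertices_def by blast
  ultimately have "S1 \<in> Min_sub R M" "S2 \<in> Min_sub R M" "S1 \<noteq> S2"
    unfolding Min_sub_def by auto
  then show False using Min by simp
qed

lemma lsg_independent_card_le:
  assumes C: "comultiplication_module R M" and fin: "finite (Min_sub R M)"
    and T: "lsg_independent R M T"
  shows "finite T \<and> card T \<le> card (Min_sub R M)"
proof -
  have T_vert: "T \<subseteq> lsg_vertices R M" using T unfolding lsg_independent_def by blast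
  have "\<exists>S. minimal_submodule R M S \<and> \<not> S \<subseteq> N" if "N \<in> T" for N
  proof -
    have "N \<in> lsg_vertices R M" using T_vert that by blast
    then obtain S where "minimal_submodule R M S" "\<not> S \<subseteq> N"
      by (rule lsg_vertex_misses_minimal_submodule[OF C])
    then show ?thesis by blast
  qed
  then obtain f where f: "\<And>N. N \<in> T \<Longrightarrow> minimal_submodule R M (f N) \<and> \<not> f N \<subseteq> N"
    by metis
  have inj: "inj_on f T"
  proof (rule inj_onI, rule ccontr)
    fix N K assume N: "N \<in> T" and K: "K \<in> T" and eq: "f N = f K" and "N \<noteq> K"
    have N_sub: "submodule N R M" and K_sub: "submodule K R M"
      using N K T_vert unfolding lsg_vertices_def by auto
    have "\<not> lsg_adj R M N K" using T N K unfolding lsg_independent_def by blast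
    then have "large_submodule R M (sum_sub M N K)"
      using N K T_vert \<open>N \<noteq> K\<close> unfolding lsg_adj_def by blast
    then have "f N \<subseteq> sum_sub M N K"
      using large_submodule_contains_minimal f[OF N] by blast
    then have "f N \<subseteq> N \<or> f N \<subseteq> K"
      using comultiplication_minimal_subset_sum_sub[OF C _ N_sub K_sub] f[OF N] by blast
    then show False using f[OF N] f[OF K] eq by metis
  qed
  have img: "f ` T \<subseteq> Min_sub R M" using f unfolding Min_sub_def by blast
  show ?thesis using inj_on_finite[OF inj img fin] card_inj_on_le[OF inj img fin] ..
qed

lemma ann_mod_separating_lsg_vertex:
  assumes r: "r \<in> carrier R" and S: "minimal_submodule R M S" "\<not> S \<subseteq> ann_mod R M {r}"
    and S': "minimal_submodule R M S'" "S' \<subseteq> ann_mod R M {r}"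
  shows "ann_mod R M {r} \<in> lsg_vertices R M"
proof -
  obtain s where "s \<in> S'" "s \<noteq> \<zero>\<^bsub>M\<^esub>" by (rule minimal_submodule_nonzero[OF S'(1)])
  then have "ann_mod R M {r} \<noteq> {\<zero>\<^bsub>M\<^esub>}" using S'(2) by blast
  moreover have "\<not> large_submodule R M (ann_mod R M {r})"
    using large_submodule_contains_minimal[OF _ S(1)] S(2) by blast
  ultimately show ?thesis using submodule_ann_mod r unfolding lsg_vertices_def by simp
qed

lemma ex_lsg_independent_card_Min_sub:
  assumes C: "comultiplication_module R M" and fin: "finite (Min_sub R M)"
    and not_one: "card (Min_sub R M) \<noteq> 1"
  obtains T where "lsg_independent R M T" "finite T" "card T = card (Min_sub R M)"
proof -
  let ?Min = "Min_sub R M"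
  have min: "minimal_submodule R M S \<longleftrightarrow> S \<in> ?Min" for S
    unfolding Min_sub_def by simp
  obtain a where a: "\<And>S. S \<in> ?Min \<Longrightarrow> a S \<in> carrier R"
    and other: "\<And>S S'. S \<in> ?Min \<Longrightarrow> S' \<in> ?Min \<Longrightarrow> S' \<noteq> S \<Longrightarrow> S' \<subseteq> ann_mod R M {a S}"
    and self: "\<And>S. S \<in> ?Min \<Longrightarrow> \<not> S \<subseteq> ann_mod R M {a S}"
    by (rule comultiplication_separating_family[OF C fin]) blast
  define V where "V S = ann_mod R M {a S}" for S
  have V_vertex: "V S \<in> lsg_vertices R M" if S: "S \<in> ?Min" for S
  proof -
    have "?Min \<noteq> {S}" using not_one by auto
    then obtain S' where "S' \<in> ?Min" "S' \<noteq> S" using S by blast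
    then show ?thesis
      unfolding V_def using ann_mod_separating_lsg_vertex a self other S min by metis
  qed
  have V_not_adj: "\<not> lsg_adj R M (V S) (V S')" if "S \<in> ?Min" "S' \<in> ?Min" for S S'
  proof (cases "S = S'")
    case False
    have "submodule (V S) R M" "submodule (V S') R M"
      using V_vertex that unfolding lsg_vertices_def by auto
    moreover have "S'' \<subseteq> V S \<or> S'' \<subseteq> V S'" if "minimal_submodule R M S''" for S''
      using other \<open>S \<in> ?Min\<close> \<open>S' \<in> ?Min\<close> False that min unfolding V_def by metis
    ultimately show ?thesis
      using comultiplication_large_sum_sub[OF C] unfolding lsg_adj_def by blast
  qed (simp add: lsg_adj_def)
  have "inj_on V ?Min"
  proof (rule inj_onI, rule ccontr)
    fix S S' assume "S \<in> ?Min" "S' \<in> ?Min" "V S = V S'" "S \<noteq> S'"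
    then show False using other[of S' S] self[of S] unfolding V_def by metis
  qed
  moreover have "lsg_independent R M (V ` ?Min)"
    unfolding lsg_independent_def using V_vertex V_not_adj by blast
  ultimately show thesis using fin by (intro that[of "V ` ?Min"]) (simp_all add: card_image)
qed

end

theorem theorem3p4:
  fixes R :: "('a, 'c) ring_scheme" and M :: "('a, 'b, 'd) module_scheme"
  assumes "Module.module R M"
    and "carrier M \<noteq> {\<zero>\<^bsub>M\<^esub>}"
    and "comultiplication_module R M"
    and "lsg_non_null R M"
    and "finite (Min_sub R M)"
  shows "lsg_independence_number R M = enat (card (Min_sub R M))"
proof -
  interpret Module.module R M by fact
  obtain T where T: "lsg_independent R M T" "finite T" "card T = card (Min_sub R M)"
    using ex_lsg_independent_card_Min_sub assms(3,5)
      card_Min_sub_neq_one_if_lsg_non_null[OF assms(3,4)] by blast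
  show ?thesis
    unfolding lsg_independence_number_def
  proof (rule cSup_eq_maximum)
    show "enat (card (Min_sub R M))
      \<in> (\<lambda>S. if finite S then enat (card S) else \<infinity>) ` {S. lsg_independent R M S}"
      using T by (intro image_eqI[where x = T]) simp_all
    show "x \<le> enat (card (Min_sub R M))"
      if "x \<in> (\<lambda>S. if finite S then enat (card S) else \<infinity>) ` {S. lsg_independent R M S}" for x
      using that lsg_independent_card_le[OF assms(3,5)] by auto
  qed
qed

end
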